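(* Fix $\omega>0$ and $\alpha_0,\alpha_1\in\mathbb C$, and let $\alpha(t)=(1-t)\alpha_0+t\alpha_1$ for $t\in[0,1]$. Assume $\omega^2>|\alpha(t)|^2$ for all $t\in[0,1]$. Let $$\xi_-(t)=\frac{\omega-\sqrt{\omega^2-|\alpha(t)|^2}}{\alpha(t)}$$ (understood as $\frac{\overline{\alpha(t)}}{\omega+\sqrt{\omega^2-|\alpha(t)|^2}}$, which is also defined when $\alpha(t)=0$). Then the curve $t\mapsto\xi_-(t)$, $t\in[0,1]$, traces a segment of a hyperbolic line in the Poincaré disk $D=\{|z|<1\}$.
   Context: A hyperbolic line in the Poincaré disk model $D$ is the intersection of $D$ with a Euclidean circle orthogonal to the unit circle, or with a straight line through the origin (a diameter). The point $\xi_-(t)$ lies in $D$ and is the parameter of the ground state of $H(t)=\omega a^*a+\frac{\alpha(t)}{2}a^2+\frac{\overline{\alpha(t)}}{2}{a^*}^2$, i.e. the ground state is annihilated by $a+\xi_-(t)a^*$. *)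

theory Defs
  imports "HOL-Analysis.Analysis"
begin

definition poincare_disk :: "complex set" where
  "poincare_disk = ball 0 1"

text \<open>Hyperbolic lines: intersection of the disk with a Euclidean circle orthogonal
  to the unit circle (centre c, radius r > 0 with |c|^2 = 1 + r^2), or with a
  straight line through the origin (a diameter).\<close>
definition hyperbolic_line :: "complex set \<Rightarrow> bool" where
  "hyperbolic_line L \<longleftrightarrow>
     (\<exists>c r. r > 0 \<and> (norm c)^2 = 1 + r^2 \<and> L = poincare_disk \<inter> sphere c r) \<or>
     (\<exists>u. u \<noteq> 0 \<and> L = poincare_disk \<inter> {z. \<exists>s::real. z = of_real s * u})"

text \<open>Ground-state parameter, in the form that is also defined when alpha = 0.\<close>
definition xi_minus :: "real \<Rightarrow> complex \<Rightarrow> complex" where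
  "xi_minus \<omega> a = cnj a / of_real (\<omega> + sqrt (\<omega>^2 - (norm a)^2))"

end

theory Submission
  imports Defs
begin

(*
  Put s = sqrt (w^2 - |a|^2). Then xi = cnj a / (w + s) has |xi|^2 = (w - s) / (w + s), whence
  (1 + |xi|^2) cnj a = 2 w xi: the point xi is a positive real multiple of cnj a. So when a runs along
  a real line <n, cnj a> = d, as the segment from alpha0 to alpha1 does, xi stays on the curve
  <n, xi> = D (1 + |xi|^2) with D = d / (2 w). For D = 0 this is a diameter; otherwise it is the circle
  |xi - c|^2 = |c|^2 - 1 with c = n / (2 D), which is orthogonal to the unit circle (and misses the open
  disk altogether when |c| <= 1).
*)

lemma norm_xi_minus_squared:
  assumes "norm a \<le> \<omega>"
  shows "(norm (xi_minus \<omega> a))^2 = (\<omega> - sqrt (\<omega>^2 - (norm a)^2)) / (\<omega> + sqrt (\<omega>^2 - (norm a)^2))"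
proof -
  define s where "s = sqrt (\<omega>^2 - (norm a)^2)"
  have "(norm a)^2 \<le> \<omega>^2" using assms by (simp add: power_mono)
  then have "s \<ge> 0" and na: "(norm a)^2 = (\<omega> - s) * (\<omega> + s)"
    by (simp_all add: s_def algebra_simps power2_eq_square[symmetric])
  moreover have "\<omega> \<ge> 0" using assms norm_ge_zero[of a] by linarith
  ultimately have "norm (complex_of_real (\<omega> + s)) = \<omega> + s"
    by (simp del: of_real_add)
  then have "(norm (xi_minus \<omega> a))^2 = (norm a)^2 / (\<omega> + s)^2"
    by (simp only: xi_minus_def s_def[symmetric] norm_divide complex_mod_cnj power_divide)
  also have "\<dots> = (\<omega> - s) / (\<omega> + s)"
    unfolding na by (simp add: power2_eq_square)
  finally show ?thesis by (simp add: s_def)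
qed

lemma norm_xi_minus_less_1:
  assumes "norm a < \<omega>"
  shows "norm (xi_minus \<omega> a) < 1"
proof -
  define s where "s = sqrt (\<omega>^2 - (norm a)^2)"
  have "(norm a)^2 < \<omega>^2" using assms by (simp add: power_strict_mono)
  then have "s > 0" by (simp add: s_def)
  moreover have "\<omega> > 0" using assms norm_ge_zero[of a] by linarith
  ultimately have "(norm (xi_minus \<omega> a))^2 < 1"
    using assms by (simp add: norm_xi_minus_squared s_def[symmetric])
  then show ?thesis by (simp add: power_less_one_iff)
qed

lemma xi_minus_scaleR_eq:
  assumes "norm a \<le> \<omega>"
  shows "(1 + (norm (xi_minus \<omega> a))^2) *\<^sub>R cnj a = (2 * \<omega>) *\<^sub>R xi_minus \<omega> a"
proof (cases "\<omega> = 0")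
  case True
  then show ?thesis using assms by (simp add: xi_minus_def)
next
  case False
  define s where "s = sqrt (\<omega>^2 - (norm a)^2)"
  have "(norm a)^2 \<le> \<omega>^2" using assms by (simp add: power_mono)
  then have "s \<ge> 0" by (simp add: s_def)
  moreover have "\<omega> > 0" using False assms norm_ge_zero[of a] by linarith
  ultimately have "1 + (norm (xi_minus \<omega> a))^2 = 2 * \<omega> / (\<omega> + s)"
    using assms by (simp add: norm_xi_minus_squared s_def[symmetric] field_simps)
  then show ?thesis
    by (simp add: xi_minus_def s_def[symmetric] scaleR_conv_of_real)
qed

lemma exists_normal_through_two_points:
  fixes z0 z1 :: complex
  obtains n where "n \<noteq> 0" and "n \<bullet> z0 = n \<bullet> z1"
proof
  let ?n = "if z0 = z1 then 1 else \<i> * (z1 - z0)"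
  show "?n \<noteq> 0" by simp
  have "?n \<bullet> (z1 - z0) = 0" by (simp add: inner_complex_def algebra_simps)
  then show "?n \<bullet> z0 = ?n \<bullet> z1" by (simp add: inner_diff_right)
qed

lemma complex_orthogonal_imp_real_multiple:
  fixes n z :: complex
  assumes "n \<noteq> 0" and "n \<bullet> z = 0"
  shows "\<exists>s::real. z = of_real s * (\<i> * n)"
proof
  have "Im (z / (\<i> * n)) = 0"
    using assms(2) by (simp add: inner_complex_def Im_divide' mult.commute)
  then have "z / (\<i> * n) = of_real (Re (z / (\<i> * n)))"
    by (simp add: complex_eq_iff)
  moreover have "z = z / (\<i> * n) * (\<i> * n)"
    using assms(1) by simp
  ultimately show "z = of_real (Re (z / (\<i> * n))) * (\<i> * n)"
    by simp
qed

lemma generalized_circle_eq_sphere: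
  fixes n z :: "'a::real_inner"
  assumes "D \<noteq> 0" and "n \<bullet> z = D * (1 + (norm z)^2)"
  shows "(norm (z - (1 / (2 * D)) *\<^sub>R n))^2 = (norm ((1 / (2 * D)) *\<^sub>R n))^2 - 1"
proof -
  let ?c = "(1 / (2 * D)) *\<^sub>R n"
  have "z \<bullet> ?c = (1 + (norm z)^2) / 2"
    using assms by (simp add: inner_commute)
  then show ?thesis using dot_norm_neg[of z ?c] by simp
qed

lemma xi_minus_mem_generalized_circle:
  assumes "norm a < \<omega>" and "n \<bullet> cnj a = d"
  shows "xi_minus \<omega> a \<in> {z \<in> poincare_disk. n \<bullet> z = d / (2 * \<omega>) * (1 + (norm z)^2)}"
proof -
  have "\<omega> > 0" using assms(1) norm_ge_zero[of a] by linarith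
  moreover have "(1 + (norm (xi_minus \<omega> a))^2) * d = 2 * \<omega> * (n \<bullet> xi_minus \<omega> a)"
    using arg_cong[OF xi_minus_scaleR_eq, of a \<omega> "inner n"] assms by simp
  ultimately show ?thesis
    using norm_xi_minus_less_1[OF assms(1)] by (simp add: poincare_disk_def field_simps)
qed

lemma hyperbolic_line_diameter:
  assumes "u \<noteq> 0"
  shows "hyperbolic_line (poincare_disk \<inter> {z. \<exists>s::real. z = of_real s * u})"
  unfolding hyperbolic_line_def using assms by (intro disjI2 exI[of _ u]) simp

lemma generalized_circle_subset_hyperbolic_line:
  fixes n :: complex
  assumes "n \<noteq> 0"
  shows "\<exists>L. hyperbolic_line L \<and> {z \<in> poincare_disk. n \<bullet> z = D * (1 + (norm z)^2)} \<subseteq> L"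
    (is "\<exists>L. _ \<and> ?S \<subseteq> L")
proof (cases "D = 0")
  case True
  then have "?S \<subseteq> poincare_disk \<inter> {z. \<exists>s::real. z = of_real s * (\<i> * n)}"
    using complex_orthogonal_imp_real_multiple[OF assms] by auto
  then show ?thesis using hyperbolic_line_diameter[of "\<i> * n"] assms by auto
next
  case False
  define c where "c = (1 / (2 * D)) *\<^sub>R n"
  have sphere: "(norm (z - c))^2 = (norm c)^2 - 1" if "z \<in> ?S" for z
    using generalized_circle_eq_sphere[OF False, of n z] that by (simp add: c_def)
  show ?thesis
  proof (cases "norm c > 1")
    case True
    define r where "r = sqrt ((norm c)^2 - 1)"
    have "r > 0" and "(norm c)^2 = 1 + r^2"
      using True by (simp_all add: r_def)
    moreover have "norm (z - c) = r" if "z \<in> ?S" for z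
      unfolding r_def using real_sqrt_unique[OF sphere[OF that] norm_ge_zero] ..
    then have "?S \<subseteq> poincare_disk \<inter> sphere c r"
      by (auto simp: dist_norm norm_minus_commute)
    ultimately show ?thesis unfolding hyperbolic_line_def by blast
  next
    case False
    have "?S = {}"
    proof safe
      fix z assume "z \<in> poincare_disk" "n \<bullet> z = D * (1 + (norm z)^2)"
      then have z: "(norm (z - c))^2 = (norm c)^2 - 1" and "norm z < 1"
        using sphere by (auto simp: poincare_disk_def)
      have "1 \<le> (norm c)^2"
        using z zero_le_power2[of "norm (z - c)"] by linarith
      then have "norm c = 1"
        using False power2_le_imp_le[of 1 "norm c"] by simp
      then have "z = c" using z by simp
      with \<open>norm z < 1\<close> \<open>norm c = 1\<close> show "z \<in> {}" by simp
    qed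
    then show ?thesis using hyperbolic_line_diameter[of 1] by auto
  qed
qed

theorem theorem3:
  fixes \<omega> :: real and \<alpha>0 \<alpha>1 :: complex
  assumes "\<omega> > 0"
    and "\<forall>t\<in>{0..1::real}. \<omega>^2 > (norm ((1 - of_real t) * \<alpha>0 + of_real t * \<alpha>1))^2"
  shows "\<exists>L. hyperbolic_line L \<and>
           (\<lambda>t. xi_minus \<omega> ((1 - of_real t) * \<alpha>0 + of_real t * \<alpha>1)) ` {0..1} \<subseteq> L"
proof -
  let ?\<alpha> = "\<lambda>t::real. (1 - of_real t) * \<alpha>0 + of_real t * \<alpha>1"
  obtain n where "n \<noteq> 0" and n: "n \<bullet> cnj \<alpha>0 = n \<bullet> cnj \<alpha>1"
    by (rule exists_normal_through_two_points)
  have "n \<bullet> cnj (?\<alpha> t) = n \<bullet> cnj \<alpha>0" for t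
  proof -
    have "cnj (?\<alpha> t) = (1 - t) *\<^sub>R cnj \<alpha>0 + t *\<^sub>R cnj \<alpha>1"
      by (simp add: scaleR_conv_of_real)
    then have "n \<bullet> cnj (?\<alpha> t) = (1 - t) * (n \<bullet> cnj \<alpha>0) + t * (n \<bullet> cnj \<alpha>1)"
      by (simp only: inner_add_right inner_scaleR_right)
    also have "\<dots> = n \<bullet> cnj \<alpha>0"
      using n by (simp add: algebra_simps)
    finally show ?thesis .
  qed
  moreover have "norm (?\<alpha> t) < \<omega>" if "t \<in> {0..1}" for t
    using assms that by (simp add: power2_less_imp_less)
  ultimately have "(\<lambda>t. xi_minus \<omega> (?\<alpha> t)) ` {0..1}
      \<subseteq> {z \<in> poincare_disk. n \<bullet> z = (n \<bullet> cnj \<alpha>0) / (2 * \<omega>) * (1 + (norm z)^2)}"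
    using xi_minus_mem_generalized_circle by blast
  then show ?thesis
    using generalized_circle_subset_hyperbolic_line[OF \<open>n \<noteq> 0\<close>] by blast
qed

end
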